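(* Let $X_S\in\mathbb{R}^{n_S\times d}$ be fixed with $\hat\Sigma_S:=X_S^\top X_S/n_S$ invertible, $\sigma>0$, $r>0$, $\Sigma_T\in\mathbb{R}^{d\times d}$ symmetric positive semidefinite, and $\mathbf{y}_S=X_S\boldsymbol{\beta}^*+\mathbf{z}$ with $\mathbf{z}\sim\mathcal{N}(0,\sigma^2I_{n_S})$, $\boldsymbol{\beta}^*\in\mathcal{B}:=\{\boldsymbol{\beta}:\|\boldsymbol{\beta}\|_2\le r\}$. Let $L_{\mathcal{B}}(\hat{\boldsymbol{\beta}}):=\max_{\boldsymbol{\beta}^*\in\mathcal{B}}\mathbb{E}_{\mathbf{z}}\|\Sigma_T^{1/2}(\hat{\boldsymbol{\beta}}(\mathbf{y}_S)-\boldsymbol{\beta}^* )\|^2$ and $\hat{\boldsymbol{\beta}}_{\mathrm{SS}}:=\frac1{n_S}\hat\Sigma_S^{-1}X_S^\top\mathbf{y}_S$. Then the minimax linear estimator is of the form $C\hat{\boldsymbol{\beta}}_{\mathrm{SS}}$: for every $A\in\mathbb{R}^{d\times n_S}$ there exists $C\in\mathbb{R}^{d\times d}$ with $L_{\mathcal{B}}(\mathbf{y}_S\mapsto C\hat{\boldsymbol{\beta}}_{\mathrm{SS}})\le L_{\mathcal{B}}(\mathbf{y}_S\mapsto A\mathbf{y}_S)$; in particular $\inf_{A}L_{\mathcal{B}}(A\mathbf{y}_S)=\inf_{C}L_{\mathcal{B}}(C\hat{\boldsymbol{\beta}}_{\mathrm{SS}})$. *)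

theory Defs
  imports "HOL-Probability.Probability"
begin

definition gauss_noise :: "real \<Rightarrow> (real ^ 'n) measure" where
  "gauss_noise \<sigma> = density lborel (\<lambda>z. ennreal (\<Prod>i\<in>UNIV. normal_density 0 \<sigma> (z $ i)))"

text \<open>Squared weighted norm  norm (Sigma_T^(1/2) v)^2 = v^T Sigma_T v.\<close>
definition wnorm2 :: "real ^ 'd ^ 'd \<Rightarrow> real ^ 'd \<Rightarrow> real" where
  "wnorm2 SigT v = v \<bullet> (SigT *v v)"

definition worst_risk ::
  "real ^ 'd ^ 'd \<Rightarrow> real ^ 'd ^ 'n \<Rightarrow> real \<Rightarrow> real \<Rightarrow> (real ^ 'n \<Rightarrow> real ^ 'd) \<Rightarrow> real" where
  "worst_risk SigT XS \<sigma> r est =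
     (SUP \<beta>\<in>cball 0 r. \<integral>z. wnorm2 SigT (est (XS *v \<beta> + z) - \<beta>) \<partial>gauss_noise \<sigma>)"

definition Sigma_hat :: "real ^ 'd ^ 'n \<Rightarrow> real ^ 'd ^ 'd" where
  "Sigma_hat XS = (1 / real CARD('n)) *\<^sub>R (transpose XS ** XS)"

definition beta_SS :: "real ^ 'd ^ 'n \<Rightarrow> real ^ 'n \<Rightarrow> real ^ 'd" where
  "beta_SS XS y = (1 / real CARD('n)) *\<^sub>R (matrix_inv (Sigma_hat XS) *v (transpose XS *v y))"

end

theory Submission
  imports Defs
begin

(* For a linear estimator y |-> M y the Gaussian risk at beta is the squared bias
   wnorm2 Sigma_T ((M X_S - I) beta) plus the variance sigma^2 tr(M^T Sigma_T M), and the bias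
   depends on M only through M X_S.  With G = (1/n_S) Sigma_hat^-1 X_S^T we have beta_SS = G y,
   G X_S = I, and P = X_S G is an orthogonal projection.  Replacing A by (A X_S) G = A P keeps
   the bias, while tr(A^T Sigma_T A) = tr((AP)^T Sigma_T (AP)) + tr((A - AP)^T Sigma_T (A - AP))
   shows that it can only decrease the variance.  So C = A X_S is at least as good as A. *)

lemma inj_axis_one: "inj (\<lambda>i::'n::finite. axis i (1::real))"
  by (auto simp: inj_def axis_eq_axis)

lemma Basis_vec_eq_range_axis: "(Basis :: (real^'n::finite) set) = range (\<lambda>i. axis i 1)"
  by (auto simp: Basis_vec_def)

lemma sum_Basis_scaleR_vec_nth:
  "(\<Sum>b\<in>(Basis :: (real^'n::finite) set). u b *\<^sub>R b) $ i = u (axis i 1)"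
proof -
  have "(\<Sum>b\<in>(Basis :: (real^'n) set). u b *\<^sub>R b) $ i
      = (\<Sum>j\<in>UNIV. u (axis j 1) * axis j 1 $ i)"
    unfolding Basis_vec_eq_range_axis by (simp add: sum.reindex[OF inj_axis_one])
  also have "\<dots> = u (axis i 1)"
    by (simp add: axis_def if_distrib cong: if_cong)
  finally show ?thesis .
qed

lemma has_bochner_integral_lborel_vec_prod:
  fixes \<phi> :: "'n::finite \<Rightarrow> real \<Rightarrow> real"
  assumes int: "\<And>i. integrable lborel (\<phi> i)"
  shows "has_bochner_integral lborel (\<lambda>z::real^'n. \<Prod>i\<in>UNIV. \<phi> i (z $ i))
           (\<Prod>i\<in>UNIV. integral\<^sup>L lborel (\<phi> i))"
proof -
  define T where "T = (\<lambda>u. \<Sum>b\<in>(Basis::(real^'n) set). u b *\<^sub>R b)"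
  define e where "e = (\<lambda>i::'n. axis i (1::real))"
  define \<psi> where "\<psi> = (\<lambda>b. \<phi> (inv e b))"
  have Basis_e: "(Basis :: (real^'n) set) = range e"
    unfolding e_def by (rule Basis_vec_eq_range_axis)
  have inj_e: "inj e"
    unfolding e_def by (rule inj_axis_one)
  have \<psi>_e: "\<psi> (e i) = \<phi> i" for i
    unfolding \<psi>_def by (simp add: inv_f_f[OF inj_e])
  have T_coord: "T u $ i = u (e i)" for u i
    unfolding T_def e_def by (rule sum_Basis_scaleR_vec_nth)
  have [measurable]: "\<phi> i \<in> borel_measurable borel" for i
    using borel_measurable_integrable[OF int] by simp
  have T_meas[measurable]: "T \<in> (\<Pi>\<^sub>M b\<in>Basis. lborel) \<rightarrow>\<^sub>M borel"
    unfolding T_def by measurable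
  have lborel_T: "lborel = distr (\<Pi>\<^sub>M b\<in>Basis. lborel) borel T"
    unfolding T_def by (rule lborel_eq)
  have integrand: "(\<Prod>i\<in>UNIV. \<phi> i (T u $ i)) = (\<Prod>b\<in>Basis. \<psi> b (u b))" for u
    unfolding Basis_e T_coord by (simp add: prod.reindex[OF inj_e] \<psi>_e)
  interpret product_sigma_finite "\<lambda>_::real^'n. lborel" ..
  have \<psi>_int: "integrable lborel (\<psi> b)" for b
    unfolding \<psi>_def by (rule int)
  have "integrable (\<Pi>\<^sub>M b\<in>Basis. lborel) (\<lambda>u. \<Prod>b\<in>Basis. \<psi> b (u b))"
    by (rule product_integrable_prod) (auto intro: \<psi>_int)
  moreover have "(\<integral>u. (\<Prod>b\<in>Basis. \<psi> b (u b)) \<partial>(\<Pi>\<^sub>M b\<in>Basis. lborel))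
      = (\<Prod>i\<in>UNIV. integral\<^sup>L lborel (\<phi> i))"
    by (subst product_integral_prod) (auto intro: \<psi>_int simp: Basis_e prod.reindex[OF inj_e] \<psi>_e)
  ultimately show ?thesis
    by (subst lborel_T) (simp add: has_bochner_integral_iff integrable_distr_eq integral_distr integrand)
qed

lemma has_bochner_integral_gauss_noise_prod:
  fixes f :: "'n::finite \<Rightarrow> real \<Rightarrow> real"
  assumes meas: "\<And>i. f i \<in> borel_measurable borel"
    and int: "\<And>i. integrable lborel (\<lambda>x. normal_density 0 \<sigma> x * f i x)"
  shows "has_bochner_integral (gauss_noise \<sigma>) (\<lambda>z::real^'n. \<Prod>i\<in>UNIV. f i (z $ i))
           (\<Prod>i\<in>UNIV. \<integral>x. normal_density 0 \<sigma> x * f i x \<partial>lborel)"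
proof -
  define g where "g = (\<lambda>z::real^'n. \<Prod>i\<in>UNIV. normal_density 0 \<sigma> (z $ i))"
  define h where "h = (\<lambda>z::real^'n. \<Prod>i\<in>UNIV. f i (z $ i))"
  have [measurable]: "f i \<in> borel_measurable borel" for i by (rule meas)
  have g_meas[measurable]: "g \<in> borel_measurable lborel" unfolding g_def by measurable
  have h_meas[measurable]: "h \<in> borel_measurable lborel" unfolding h_def by measurable
  have g_nonneg: "AE x in lborel. 0 \<le> g x" unfolding g_def by (auto intro!: prod_nonneg)
  have "has_bochner_integral lborel (\<lambda>z. g z * h z)
          (\<Prod>i\<in>UNIV. \<integral>x. normal_density 0 \<sigma> x * f i x \<partial>lborel)"
    unfolding g_def h_def prod.distrib[symmetric]
    by (rule has_bochner_integral_lborel_vec_prod[OF int])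
  moreover have "gauss_noise \<sigma> = density lborel g"
    unfolding gauss_noise_def g_def ..
  ultimately show ?thesis
    unfolding h_def[symmetric]
    by (simp add: has_bochner_integral_iff integrable_density[OF h_meas g_meas g_nonneg]
        integral_density[OF h_meas g_meas g_nonneg])
qed
lemma has_bochner_integral_gauss_noise_monomial:
  fixes m :: "'n::finite \<Rightarrow> nat"
  assumes "\<sigma> > 0"
  shows "has_bochner_integral (gauss_noise \<sigma>) (\<lambda>z::real^'n. \<Prod>i\<in>UNIV. (z $ i) ^ m i)
           (\<Prod>i\<in>UNIV. \<integral>x. normal_density 0 \<sigma> x * x ^ m i \<partial>lborel)"
  using integrable_normal_moment[OF assms, of 0]
  by (intro has_bochner_integral_gauss_noise_prod) auto

lemma has_bochner_integral_gauss_noise_one: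
  assumes "\<sigma> > 0"
  shows "has_bochner_integral (gauss_noise \<sigma>) (\<lambda>z::real^'n::finite. 1) (1::real)"
  using has_bochner_integral_gauss_noise_monomial[OF assms, of "\<lambda>_::'n. 0"] assms by simp

lemma has_bochner_integral_gauss_noise_coordinate:
  assumes "\<sigma> > 0"
  shows "has_bochner_integral (gauss_noise \<sigma>) (\<lambda>z::real^'n::finite. z $ k) 0"
proof -
  have monomial: "(\<Prod>i\<in>UNIV. (z $ i) ^ (if i = k then 1 else 0)) = z $ k" for z :: "real^'n"
    by (simp add: if_distrib prod.delta cong: if_cong)
  have moment: "(\<Prod>i\<in>UNIV. \<integral>x. normal_density 0 \<sigma> x * x ^ (if i = k then 1 else 0) \<partial>lborel) = 0"
    using integral_normal_moment_odd[OF assms, of 0 0] by (intro prod_zero) auto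
  show ?thesis
    using has_bochner_integral_gauss_noise_monomial[OF assms, of "\<lambda>i. if i = k then 1 else 0"]
    unfolding monomial moment .
qed

lemma has_bochner_integral_gauss_noise_coordinate_mult:
  assumes "\<sigma> > 0"
  shows "has_bochner_integral (gauss_noise \<sigma>) (\<lambda>z::real^'n::finite. z $ k * z $ l)
           (if k = l then \<sigma>\<^sup>2 else 0)"
proof -
  define m where "m = (\<lambda>i. (if i = k then 1 else 0) + (if i = l then 1 else 0 :: nat))"
  have monomial: "(\<Prod>i\<in>UNIV. (z $ i) ^ m i) = z $ k * z $ l" for z :: "real^'n"
  proof -
    have "(z $ i) ^ m i = (if i = k then z $ i else 1) * (if i = l then z $ i else 1)" for i
      by (simp add: m_def power_add)
    then show ?thesis by (simp add: prod.distrib prod.delta)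
  qed
  have moment: "(\<Prod>i\<in>UNIV. \<integral>x. normal_density 0 \<sigma> x * x ^ m i \<partial>lborel)
      = (if k = l then \<sigma>\<^sup>2 else 0)"
  proof (cases "k = l")
    case True
    have "(\<integral>x. normal_density 0 \<sigma> x * x ^ m i \<partial>lborel) = (if i = k then \<sigma>\<^sup>2 else 1)" for i
      using integral_normal_moment_even[OF assms, of 0 1] assms by (simp add: m_def True power2_eq_square)
    then show ?thesis using True by (simp add: prod.delta)
  next
    case False
    then show ?thesis
      using integral_normal_moment_odd[OF assms, of 0 0] by (intro trans[OF prod_zero]) (auto simp: m_def)
  qed
  show ?thesis
    using has_bochner_integral_gauss_noise_monomial[OF assms, of m] unfolding monomial moment .
qed

lemma has_bochner_integral_gauss_noise_inner:
  assumes "\<sigma> > 0"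
  shows "has_bochner_integral (gauss_noise \<sigma>) (\<lambda>z::real^'n::finite. a \<bullet> z) 0"
proof -
  have "has_bochner_integral (gauss_noise \<sigma>) (\<lambda>z::real^'n. \<Sum>i\<in>UNIV. a $ i * z $ i)
          (\<Sum>i\<in>UNIV. a $ i * 0)"
    by (intro has_bochner_integral_sum has_bochner_integral_mult_right
        has_bochner_integral_gauss_noise_coordinate assms)
  then show ?thesis by (simp add: inner_vec_def)
qed

lemma has_bochner_integral_gauss_noise_quadratic_form:
  assumes "\<sigma> > 0"
  shows "has_bochner_integral (gauss_noise \<sigma>) (\<lambda>z::real^'n::finite. z \<bullet> (Q *v z)) (\<sigma>\<^sup>2 * trace Q)"
proof -
  have "has_bochner_integral (gauss_noise \<sigma>)
          (\<lambda>z::real^'n. \<Sum>i\<in>UNIV. \<Sum>j\<in>UNIV. Q $ i $ j * (z $ i * z $ j))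
          (\<Sum>i\<in>UNIV. \<Sum>j\<in>UNIV. Q $ i $ j * (if i = j then \<sigma>\<^sup>2 else 0))"
    by (intro has_bochner_integral_sum has_bochner_integral_mult_right
        has_bochner_integral_gauss_noise_coordinate_mult assms)
  moreover have "z \<bullet> (Q *v z) = (\<Sum>i\<in>UNIV. \<Sum>j\<in>UNIV. Q $ i $ j * (z $ i * z $ j))" for z :: "real^'n"
    by (simp add: inner_vec_def matrix_vector_mult_def sum_distrib_left mult_ac)
  moreover have "(\<Sum>i\<in>UNIV. \<Sum>j\<in>UNIV. Q $ i $ j * (if i = j then \<sigma>\<^sup>2 else 0)) = \<sigma>\<^sup>2 * trace Q"
    by (simp add: trace_def sum_distrib_left mult.commute if_distrib cong: if_cong)
  ultimately show ?thesis by simp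
qed

lemma inner_matrix_vector_mult_transpose:
  fixes A :: "real^'n::finite^'m::finite"
  shows "(A *v x) \<bullet> y = x \<bullet> (transpose A *v y)"
  by (metis dot_lmul_matrix vector_transpose_matrix)

lemma wnorm2_affine_expand:
  fixes S :: "real^'d::finite^'d" and B :: "real^'n::finite^'d"
  shows "wnorm2 S (c + B *v z) = wnorm2 S c + (transpose (S ** B) *v c) \<bullet> z
           + (transpose B *v (S *v c)) \<bullet> z + z \<bullet> ((transpose B ** S ** B) *v z)"
proof -
  have "c \<bullet> (S *v (B *v z)) = (transpose (S ** B) *v c) \<bullet> z"
    by (simp add: dot_lmul_matrix matrix_vector_mul_assoc)
  moreover have "(B *v z) \<bullet> (S *v c) = (transpose B *v (S *v c)) \<bullet> z"
    by (metis inner_matrix_vector_mult_transpose inner_commute)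
  moreover have "(B *v z) \<bullet> (S *v (B *v z)) = z \<bullet> ((transpose B ** S ** B) *v z)"
    by (simp add: inner_matrix_vector_mult_transpose matrix_vector_mul_assoc matrix_mul_assoc)
  ultimately show ?thesis
    by (simp add: wnorm2_def matrix_vector_right_distrib inner_add_left inner_add_right)
qed

lemma has_bochner_integral_gauss_noise_wnorm2_affine:
  fixes S :: "real^'d::finite^'d" and B :: "real^'n::finite^'d"
  assumes "\<sigma> > 0"
  shows "has_bochner_integral (gauss_noise \<sigma>) (\<lambda>z. wnorm2 S (c + B *v z))
           (wnorm2 S c + \<sigma>\<^sup>2 * trace (transpose B ** S ** B))"
proof -
  have "has_bochner_integral (gauss_noise \<sigma>)
          (\<lambda>z. wnorm2 S c * 1 + (transpose (S ** B) *v c) \<bullet> z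
             + (transpose B *v (S *v c)) \<bullet> z + z \<bullet> ((transpose B ** S ** B) *v z))
          (wnorm2 S c * 1 + 0 + 0 + \<sigma>\<^sup>2 * trace (transpose B ** S ** B))"
    by (intro has_bochner_integral_add has_bochner_integral_mult_right assms
        has_bochner_integral_gauss_noise_one has_bochner_integral_gauss_noise_inner
        has_bochner_integral_gauss_noise_quadratic_form)
  then show ?thesis by (simp add: wnorm2_affine_expand)
qed

lemma trace_congruence_eq_sum_wnorm2:
  fixes S :: "real^'d::finite^'d" and B :: "real^'n::finite^'d"
  shows "trace (transpose B ** S ** B) = (\<Sum>i\<in>UNIV. wnorm2 S (column i B))"
  by (simp add: trace_def wnorm2_def matrix_matrix_mult_def matrix_vector_mult_def
      transpose_def column_def inner_vec_def sum_distrib_left mult_ac)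
     (rule sum.cong[OF refl], subst sum.swap, simp add: mult_ac)

lemma trace_congruence_nonneg:
  fixes S :: "real^'d::finite^'d" and B :: "real^'n::finite^'d"
  assumes "\<And>v. v \<bullet> (S *v v) \<ge> 0"
  shows "0 \<le> trace (transpose B ** S ** B)"
  unfolding trace_congruence_eq_sum_wnorm2 wnorm2_def by (intro sum_nonneg assms)


lemma matrix_add_rdistrib: "(A + B) ** C = A ** C + B ** C"
  for A B :: "'a::semiring_1^'n::finite^'m::finite" and C :: "'a^'p::finite^'n"
  by (simp add: matrix_matrix_mult_def vec_eq_iff sum.distrib algebra_simps)

lemma matrix_diff_rdistrib: "(A - B) ** C = A ** C - B ** C"
  for A B :: "'a::ring_1^'n::finite^'m::finite" and C :: "'a^'p::finite^'n"
  by (simp add: matrix_matrix_mult_def vec_eq_iff sum_subtractf algebra_simps)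

lemma transpose_add: "transpose (A + B) = transpose A + transpose B"
  for A B :: "'a::semiring_1^'n::finite^'m::finite"
  by (simp add: transpose_def vec_eq_iff)

lemma trace_congruence_projection_le:
  fixes S :: "real^'d::finite^'d" and A :: "real^'n::finite^'d" and P :: "real^'n^'n"
  assumes psd: "\<And>v. v \<bullet> (S *v v) \<ge> 0"
    and sym: "transpose P = P" and idem: "P ** P = P"
  shows "trace (transpose (A ** P) ** S ** (A ** P)) \<le> trace (transpose A ** S ** A)"
proof -
  define U where "U = A ** P"
  define V where "V = A - U"
  have VP: "V ** P = 0"
    unfolding V_def U_def matrix_diff_rdistrib matrix_mul_assoc[symmetric] idem by simp
  have "P ** transpose V = transpose (V ** P)"
    by (simp only: matrix_transpose_mul sym)
  also have "\<dots> = 0"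
    unfolding VP by (simp add: transpose_def vec_eq_iff)
  finally have PV: "P ** transpose V = 0" .
  have "trace (transpose U ** S ** V) = trace (P ** (transpose A ** S ** V))"
    by (simp only: U_def matrix_transpose_mul sym matrix_mul_assoc)
  also have "\<dots> = trace (transpose A ** S ** (V ** P))"
    by (rule trans[OF trace_mul_sym]) (simp only: matrix_mul_assoc)
  finally have cross1: "trace (transpose U ** S ** V) = 0"
    by (simp add: VP trace_0[simplified])
  have "trace (transpose V ** S ** U) = trace ((transpose V ** S ** A) ** P)"
    by (simp only: U_def matrix_mul_assoc)
  also have "\<dots> = trace ((P ** transpose V) ** S ** A)"
    by (rule trans[OF trace_mul_sym]) (simp only: matrix_mul_assoc)
  finally have cross2: "trace (transpose V ** S ** U) = 0"
    by (simp add: PV trace_0[simplified])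
  have "trace (transpose A ** S ** A) = trace (transpose (U + V) ** S ** (U + V))"
    by (simp add: V_def)
  also have "\<dots> = trace (transpose U ** S ** U) + trace (transpose U ** S ** V)
      + trace (transpose V ** S ** U) + trace (transpose V ** S ** V)"
    by (simp only: transpose_add matrix_add_rdistrib matrix_add_ldistrib trace_add add.assoc)
  finally show ?thesis
    using cross1 cross2 trace_congruence_nonneg[OF psd, of V] by (simp add: U_def)
qed

lemma worst_risk_linear:
  fixes S :: "real^'d::finite^'d" and X :: "real^'d^'n::finite" and M :: "real^'n^'d"
  assumes "\<sigma> > 0"
  shows "worst_risk S X \<sigma> r (\<lambda>y. M *v y) =
    (SUP \<beta>\<in>cball 0 r. wnorm2 S ((M ** X) *v \<beta> - \<beta>) + \<sigma>\<^sup>2 * trace (transpose M ** S ** M))"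
  unfolding worst_risk_def
proof (intro SUP_cong refl)
  fix \<beta> :: "real^'d"
  have error: "M *v (X *v \<beta> + z) - \<beta> = ((M ** X) *v \<beta> - \<beta>) + M *v z" for z
    by (simp add: matrix_vector_right_distrib matrix_vector_mul_assoc algebra_simps)
  show "(\<integral>z. wnorm2 S (M *v (X *v \<beta> + z) - \<beta>) \<partial>gauss_noise \<sigma>) =
      wnorm2 S ((M ** X) *v \<beta> - \<beta>) + \<sigma>\<^sup>2 * trace (transpose M ** S ** M)"
    unfolding error
    using has_bochner_integral_gauss_noise_wnorm2_affine[OF assms]
    by (rule has_bochner_integral_integral_eq)
qed

lemma bdd_above_bias_cball:
  fixes S D :: "real^'d::finite^'d"
  shows "bdd_above ((\<lambda>\<beta>. wnorm2 S (D *v \<beta> - \<beta>) + k) ` cball 0 r)"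
proof -
  have "continuous_on (cball 0 r) (\<lambda>\<beta>. wnorm2 S (D *v \<beta> - \<beta>) + k)"
    unfolding wnorm2_def
    by (intro continuous_intros bounded_linear.continuous_on[OF matrix_vector_mul_bounded_linear])
  then show ?thesis
    by (intro bounded_imp_bdd_above compact_imp_bounded compact_continuous_image) auto
qed

lemma worst_risk_linear_nonneg:
  fixes S :: "real^'d::finite^'d" and X :: "real^'d^'n::finite" and M :: "real^'n^'d"
  assumes "\<sigma> > 0" and "r \<ge> 0" and psd: "\<And>v. v \<bullet> (S *v v) \<ge> 0"
  shows "0 \<le> worst_risk S X \<sigma> r (\<lambda>y. M *v y)"
  unfolding worst_risk_linear[OF \<open>\<sigma> > 0\<close>]
proof (rule cSUP_upper2[OF bdd_above_bias_cball])
  show "(0::real^'d) \<in> cball 0 r" using \<open>r \<ge> 0\<close> by simp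
  show "0 \<le> wnorm2 S ((M ** X) *v 0 - 0) + \<sigma>\<^sup>2 * trace (transpose M ** S ** M)"
    using trace_congruence_nonneg[OF psd, of M] by (simp add: wnorm2_def)
qed

lemma worst_risk_linear_projection_le:
  fixes S :: "real^'d::finite^'d" and X :: "real^'d^'n::finite" and G :: "real^'n^'d"
    and A :: "real^'n^'d"
  assumes "\<sigma> > 0" and psd: "\<And>v. v \<bullet> (S *v v) \<ge> 0"
    and left_inverse: "G ** X = mat 1" and sym: "transpose (X ** G) = X ** G"
  shows "worst_risk S X \<sigma> r (\<lambda>y. (A ** X ** G) *v y) \<le> worst_risk S X \<sigma> r (\<lambda>y. A *v y)"
proof (cases "cball (0::real^'d) r = {}")
  case True
  then show ?thesis by (simp add: worst_risk_def)
next
  case False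
  define P where "P = X ** G"
  have idem: "P ** P = P"
    unfolding P_def by (metis left_inverse matrix_mul_assoc matrix_mul_rid)
  have same_bias: "(A ** X ** G) ** X = A ** X"
    by (metis left_inverse matrix_mul_assoc matrix_mul_rid)
  have "trace (transpose (A ** P) ** S ** (A ** P)) \<le> trace (transpose A ** S ** A)"
    using trace_congruence_projection_le[OF psd sym[folded P_def] idem] .
  then have less_variance: "\<sigma>\<^sup>2 * trace (transpose (A ** X ** G) ** S ** (A ** X ** G))
      \<le> \<sigma>\<^sup>2 * trace (transpose A ** S ** A)"
    by (simp add: P_def matrix_mul_assoc mult_left_mono)
  show ?thesis
    unfolding worst_risk_linear[OF \<open>\<sigma> > 0\<close>] same_bias
  proof (rule cSUP_mono[OF False bdd_above_bias_cball])
    fix \<beta> :: "real^'d"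
    assume "\<beta> \<in> cball 0 r"
    then show "\<exists>\<beta>'\<in>cball 0 r. wnorm2 S ((A ** X) *v \<beta> - \<beta>)
          + \<sigma>\<^sup>2 * trace (transpose (A ** X ** G) ** S ** (A ** X ** G))
        \<le> wnorm2 S ((A ** X) *v \<beta>' - \<beta>') + \<sigma>\<^sup>2 * trace (transpose A ** S ** A)"
      using less_variance by (intro bexI[of _ \<beta>]) simp_all
  qed
qed

lemma matrix_inv_cancel:
  fixes A :: "'a::semiring_1^'n::finite^'n"
  assumes "invertible A"
  shows "A ** matrix_inv A = mat 1" and "matrix_inv A ** A = mat 1"
  using someI_ex[OF assms[unfolded invertible_def]] by (simp_all add: matrix_inv_def)

lemma transpose_matrix_inv_symmetric:
  fixes A :: "'a::comm_semiring_1^'n::finite^'n"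
  assumes "invertible A" and "transpose A = A"
  shows "transpose (matrix_inv A) = matrix_inv A"
proof -
  have "A ** transpose (matrix_inv A) = mat 1"
    using arg_cong[OF matrix_inv_cancel(2)[OF assms(1)], of transpose]
    by (simp add: matrix_transpose_mul assms(2))
  then have "matrix_inv A ** (A ** transpose (matrix_inv A)) = matrix_inv A"
    by simp
  then show ?thesis
    by (simp add: matrix_mul_assoc matrix_inv_cancel(2)[OF assms(1)])
qed

definition ols_matrix :: "real^'d^'n \<Rightarrow> real^'n^'d" where
  "ols_matrix XS = (1 / real CARD('n)) *\<^sub>R (matrix_inv (Sigma_hat XS) ** transpose XS)"

lemma beta_SS_eq_ols_matrix: "beta_SS XS y = ols_matrix XS *v y"
  unfolding beta_SS_def ols_matrix_def
  by (simp add: matrix_vector_mul_assoc scaleR_matrix_vector_assoc del: transpose_matrix_vector)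

lemma ols_matrix_left_inverse:
  assumes "invertible (Sigma_hat XS)"
  shows "ols_matrix XS ** XS = mat 1"
proof -
  have "ols_matrix XS ** XS = matrix_inv (Sigma_hat XS) ** Sigma_hat XS"
    unfolding ols_matrix_def Sigma_hat_def
    by (simp add: scalar_matrix_assoc[symmetric] matrix_scalar_ac matrix_mul_assoc)
  then show ?thesis
    using matrix_inv_cancel(2)[OF assms] by simp
qed

lemma hat_matrix_symmetric:
  assumes "invertible (Sigma_hat XS)"
  shows "transpose (XS ** ols_matrix XS) = XS ** ols_matrix XS"
proof -
  have "transpose (Sigma_hat XS) = Sigma_hat XS"
    unfolding Sigma_hat_def transpose_scalar matrix_transpose_mul by simp
  then have "transpose (matrix_inv (Sigma_hat XS)) = matrix_inv (Sigma_hat XS)"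
    using transpose_matrix_inv_symmetric[OF assms] by simp
  then show ?thesis
    unfolding ols_matrix_def
    by (simp add: matrix_transpose_mul transpose_scalar matrix_scalar_ac
        scalar_matrix_assoc[symmetric] matrix_mul_assoc)
qed

theorem claim1:
  fixes XS :: "real ^ 'd ^ 'n" and SigT :: "real ^ 'd ^ 'd" and \<sigma> r :: real
  assumes "invertible (Sigma_hat XS)"
    and "\<sigma> > 0" and "r > 0"
    and "transpose SigT = SigT"
    and "\<And>v. v \<bullet> (SigT *v v) \<ge> 0"
  shows "(\<forall>A :: real ^ 'n ^ 'd. \<exists>C :: real ^ 'd ^ 'd.
            worst_risk SigT XS \<sigma> r (\<lambda>y. C *v beta_SS XS y)
              \<le> worst_risk SigT XS \<sigma> r (\<lambda>y. A *v y))
       \<and> (INF A :: real ^ 'n ^ 'd. worst_risk SigT XS \<sigma> r (\<lambda>y. A *v y))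
           = (INF C :: real ^ 'd ^ 'd. worst_risk SigT XS \<sigma> r (\<lambda>y. C *v beta_SS XS y))"
proof -
  note inv = assms(1) and noise_pos = assms(2) and psd = assms(5)
  define G where "G = ols_matrix XS"
  define RA where "RA A = worst_risk SigT XS \<sigma> r (\<lambda>y. A *v y)" for A :: "real^'n^'d"
  define RC where "RC C = worst_risk SigT XS \<sigma> r (\<lambda>y. C *v beta_SS XS y)" for C :: "real^'d^'d"
  have RC_RA: "RC C = RA (C ** G)" for C
    unfolding RC_def RA_def G_def beta_SS_eq_ols_matrix by (simp add: matrix_vector_mul_assoc)
  have dominated: "RC (A ** XS) \<le> RA A" for A
    unfolding RC_RA RA_def G_def
    using worst_risk_linear_projection_le[OF noise_pos psd
        ols_matrix_left_inverse[OF inv] hat_matrix_symmetric[OF inv]] .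
  have RA_nonneg: "0 \<le> RA A" for A
    unfolding RA_def using assms(3) by (intro worst_risk_linear_nonneg[OF noise_pos _ psd]) simp
  have RC_nonneg: "0 \<le> RC C" for C
    unfolding RC_RA by (rule RA_nonneg)
  have "(INF A. RA A) \<le> (INF C. RC C)"
    by (rule cINF_mono) (auto intro!: bdd_belowI[of _ 0] RA_nonneg simp: RC_RA)
  moreover have "(INF C. RC C) \<le> (INF A. RA A)"
    by (rule cINF_mono) (auto intro!: bdd_belowI[of _ 0] RC_nonneg dominated)
  ultimately show ?thesis
    using dominated unfolding RA_def RC_def by (auto intro: antisym)
qed

end
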